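(* Let $G'=(V',E',m')$ and $G=(V,E,m)$ be finite weighted graphs such that $G'$ is a weak cover of $G$. Then $h_G\ge h_{G'}$.
   Context: For a finite graph $G=(V,E)$ with positive edge weights $m$, set $m(v)=\sum_{e\ni v}m(e)$, $m(U)=\sum_{v\in U}m(v)$, $m(U_1,U_2)=\sum_{(u_1,u_2)\in U_1\times U_2,\ \{u_1,u_2\}\in E}m(\{u_1,u_2\})$, and $h_G=\min_{\emptyset\neq U\subsetneq V}\frac{m(U,V\setminus U)\,m(V)}{m(U)\,m(V\setminus U)}$. $G'$ is a weak cover of $G$ if there is a surjective map $p:V'\to V$ such that for every $\{v',u'\}\in E'$, $\{p(v'),p(u')\}\in E$, the induced map $p:E'\to E$ is surjective, and for every $e\in E$, $m(e)=\sum_{e'\in p^{-1}(e)}m'(e')$. *)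

theory Defs
  imports Complex_Main
begin

definition wgraph :: "'a set \<Rightarrow> 'a set set \<Rightarrow> ('a set \<Rightarrow> real) \<Rightarrow> bool" where
  "wgraph V E m \<longleftrightarrow> finite V \<and> (\<forall>e\<in>E. e \<subseteq> V \<and> card e = 2) \<and> (\<forall>e\<in>E. 0 < m e)"

definition vdeg :: "'a set set \<Rightarrow> ('a set \<Rightarrow> real) \<Rightarrow> 'a \<Rightarrow> real" where
  "vdeg E m v = (\<Sum>e\<in>{e\<in>E. v \<in> e}. m e)"

definition vol :: "'a set set \<Rightarrow> ('a set \<Rightarrow> real) \<Rightarrow> 'a set \<Rightarrow> real" where
  "vol E m U = (\<Sum>v\<in>U. vdeg E m v)"

definition cut :: "'a set set \<Rightarrow> ('a set \<Rightarrow> real) \<Rightarrow> 'a set \<Rightarrow> 'a set \<Rightarrow> real" where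
  "cut E m U1 U2 = (\<Sum>(u1,u2)\<in>U1 \<times> U2. if {u1,u2} \<in> E then m {u1,u2} else 0)"

definition cheeger :: "'a set \<Rightarrow> 'a set set \<Rightarrow> ('a set \<Rightarrow> real) \<Rightarrow> real" where
  "cheeger V E m = Min {cut E m U (V - U) * vol E m V / (vol E m U * vol E m (V - U)) | U. U \<noteq> {} \<and> U \<subset> V}"

definition weak_cover ::
  "'a set \<Rightarrow> 'a set set \<Rightarrow> ('a set \<Rightarrow> real) \<Rightarrow> 'b set \<Rightarrow> 'b set set \<Rightarrow> ('b set \<Rightarrow> real) \<Rightarrow> ('a \<Rightarrow> 'b) \<Rightarrow> bool" where
  "weak_cover V' E' m' V E m p \<longleftrightarrow>
     p ` V' = V \<and>
     (\<forall>v'\<in>V'. \<forall>u'\<in>V'. {v', u'} \<in> E' \<longrightarrow> {p v', p u'} \<in> E) \<and>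
     (\<lambda>e'. p ` e') ` E' = E \<and>
     (\<forall>e\<in>E. m e = (\<Sum>e'\<in>{e'\<in>E'. p ` e' = e}. m' e'))"

end

theory Submission
  imports Defs
begin

text \<open>Volumes and cut weights are sums, over the edges, of the edge weight times a count that
  only depends on the two endpoints. A weak cover maps each edge of \<open>G'\<close> bijectively onto an
  edge of \<open>G\<close>, and the weight of an edge of \<open>G\<close> is the total weight of the edges above it.
  Hence pulling a vertex set \<open>U\<close> of \<open>G\<close> back along \<open>p\<close> preserves the volumes of \<open>U\<close>, of its
  complement and of the whole vertex set, as well as the weight of the cut: every Cheeger
  ratio of \<open>G\<close> is also a Cheeger ratio of \<open>G'\<close>.\<close>

lemma wgraph_finite_edges:
  assumes "wgraph V E m"
  shows "finite E"
  using assms unfolding wgraph_def by (metis Pow_iff finite_Pow_iff finite_subset subsetI)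

lemma vol_eq_sum_edges:
  assumes "finite U" "finite E"
  shows "vol E m U = (\<Sum>e\<in>E. m e * card (U \<inter> e))"
proof -
  have "vol E m U = (\<Sum>v\<in>U. \<Sum>e\<in>{e. e \<in> E \<and> v \<in> e}. m e)"
    by (simp add: vol_def vdeg_def)
  also have "\<dots> = (\<Sum>e\<in>E. \<Sum>v\<in>{v. v \<in> U \<and> v \<in> e}. m e)"
    by (rule sum.swap_restrict[OF assms])
  also have "\<dots> = (\<Sum>e\<in>E. m e * card (U \<inter> e))"
    by (simp add: Int_def mult.commute)
  finally show ?thesis .
qed

lemma cut_eq_sum_edges:
  assumes "finite U" "finite W" "finite E"
  shows "cut E m U W = (\<Sum>e\<in>E. m e * card {(u, w) \<in> U \<times> W. {u, w} = e})"
proof -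
  have edge_sum: "(if {u, w} \<in> E then m {u, w} else 0) = (\<Sum>e\<in>{e. e \<in> E \<and> {u, w} = e}. m e)"
    for u w
  proof -
    have "{e. e \<in> E \<and> {u, w} = e} = (if {u, w} \<in> E then {{u, w}} else {})" by auto
    then show ?thesis by simp
  qed
  have "cut E m U W = (\<Sum>x\<in>U \<times> W. \<Sum>e\<in>{e. e \<in> E \<and> (case x of (u, w) \<Rightarrow> {u, w} = e)}. m e)"
    unfolding cut_def by (intro sum.cong) (auto simp: edge_sum)
  also have "\<dots> = (\<Sum>e\<in>E. \<Sum>x\<in>{x. x \<in> U \<times> W \<and> (case x of (u, w) \<Rightarrow> {u, w} = e)}. m e)"
    using assms by (intro sum.swap_restrict) auto
  also have "\<dots> = (\<Sum>e\<in>E. m e * card {(u, w) \<in> U \<times> W. {u, w} = e})"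
    by (auto simp: mult.commute intro!: sum.cong arg_cong[where f = card])
  finally show ?thesis .
qed

lemma sum_edges_weak_cover:
  assumes "finite E'" and "weak_cover V' E' m' V E m p"
  shows "(\<Sum>e\<in>E. m e * c e) = (\<Sum>e'\<in>E'. m' e' * c (p ` e'))"
proof -
  have image: "(\<lambda>e'. p ` e') ` E' = E"
    and weight: "\<And>e. e \<in> E \<Longrightarrow> m e = (\<Sum>e'\<in>{e'\<in>E'. p ` e' = e}. m' e')"
    using assms(2) by (auto simp: weak_cover_def)
  have "(\<Sum>e'\<in>E'. m' e' * c (p ` e')) =
      (\<Sum>e\<in>(\<lambda>e'. p ` e') ` E'. \<Sum>e'\<in>{e'. e' \<in> E' \<and> p ` e' = e}. m' e' * c (p ` e'))"
    by (rule sum.image_gen[OF assms(1)])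
  also have "\<dots> = (\<Sum>e\<in>E. (\<Sum>e'\<in>{e'. e' \<in> E' \<and> p ` e' = e}. m' e') * c e)"
    by (auto simp: image sum_distrib_right intro!: sum.cong)
  also have "\<dots> = (\<Sum>e\<in>E. m e * c e)"
    by (simp add: weight)
  finally show ?thesis ..
qed

lemma weak_cover_edge:
  assumes "wgraph V' E' m'" "wgraph V E m" "weak_cover V' E' m' V E m p" "e' \<in> E'"
  obtains a b where "e' = {a, b}" "a \<in> V'" "b \<in> V'" "p a \<noteq> p b"
proof -
  obtain a b where ab: "e' = {a, b}" "a \<noteq> b"
    using assms(1,4) card_2_iff unfolding wgraph_def by metis
  have "card (p ` e') = 2"
    using assms(2-4) unfolding wgraph_def weak_cover_def by blast
  then have "p a \<noteq> p b" using ab by auto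
  moreover have "a \<in> V'" "b \<in> V'" using assms(1,4) ab unfolding wgraph_def by auto
  ultimately show thesis using ab that by blast
qed

lemma card_Int_doubleton:
  assumes "a \<noteq> b"
  shows "card (U \<inter> {a, b}) = of_bool (a \<in> U) + of_bool (b \<in> U)"
  using assms by (cases "a \<in> U"; cases "b \<in> U") (auto simp: Int_insert_right)

lemma card_pairs_doubleton:
  assumes "a \<noteq> b"
  shows "card {(u, w) \<in> U \<times> W. {u, w} = {a, b}} =
    of_bool (a \<in> U \<and> b \<in> W) + of_bool (b \<in> U \<and> a \<in> W)"
proof -
  have "{(u, w) \<in> U \<times> W. {u, w} = {a, b}} =
      (if a \<in> U \<and> b \<in> W then {(a, b)} else {}) \<union> (if b \<in> U \<and> a \<in> W then {(b, a)} else {})"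
    by (auto simp: doubleton_eq_iff)
  then show ?thesis using assms by auto
qed

definition cheeger_ratio :: "'a set \<Rightarrow> 'a set set \<Rightarrow> ('a set \<Rightarrow> real) \<Rightarrow> 'a set \<Rightarrow> real" where
  "cheeger_ratio V E m U = cut E m U (V - U) * vol E m V / (vol E m U * vol E m (V - U))"

lemma cheeger_eq_Min_ratio:
  "cheeger V E m = Min (cheeger_ratio V E m ` {U. U \<noteq> {} \<and> U \<subset> V})"
  unfolding cheeger_def cheeger_ratio_def by (rule arg_cong[where f = Min]) blast

lemma finite_cheeger_ratios:
  assumes "finite V"
  shows "finite (cheeger_ratio V E m ` {U. U \<noteq> {} \<and> U \<subset> V})"
proof (rule finite_imageI)
  show "finite {U. U \<noteq> {} \<and> U \<subset> V}"
    using assms by (rule finite_subset[rotated, OF finite_Pow_iff[THEN iffD2]]) auto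
qed

lemma cheeger_le_ratio:
  assumes "finite V" "U \<noteq> {}" "U \<subset> V"
  shows "cheeger V E m \<le> cheeger_ratio V E m U"
  unfolding cheeger_eq_Min_ratio
  by (rule Min_le[OF finite_cheeger_ratios[OF assms(1)]]) (use assms(2,3) in blast)

lemma cheeger_attained:
  assumes "finite V" "2 \<le> card V"
  obtains U where "U \<noteq> {}" "U \<subset> V" "cheeger V E m = cheeger_ratio V E m U"
proof -
  obtain v where "v \<in> V" using assms(2) by fastforce
  moreover have "{v} \<noteq> V" using assms(2) by auto
  ultimately have "{U. U \<noteq> {} \<and> U \<subset> V} \<noteq> {}" by blast
  then have "cheeger V E m \<in> cheeger_ratio V E m ` {U. U \<noteq> {} \<and> U \<subset> V}"
    unfolding cheeger_eq_Min_ratio by (simp add: Min_in finite_cheeger_ratios assms(1))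
  then show thesis using that by blast
qed

locale weak_covering =
  fixes V' :: "'a set" and E' :: "'a set set" and m' :: "'a set \<Rightarrow> real"
    and V :: "'b set" and E :: "'b set set" and m :: "'b set \<Rightarrow> real"
    and p :: "'a \<Rightarrow> 'b"
  assumes cover_wgraph: "wgraph V' E' m'"
    and base_wgraph: "wgraph V E m"
    and weak_cover: "weak_cover V' E' m' V E m p"
begin

lemma image_vertices: "p ` V' = V"
  using weak_cover by (simp add: weak_cover_def)

lemma finite_cover_vertices: "finite V'"
  using cover_wgraph by (simp add: wgraph_def)

lemma finite_base_vertices: "finite V"
  using base_wgraph by (simp add: wgraph_def)

lemma vol_preimage:
  assumes "U \<subseteq> V"
  shows "vol E' m' (V' \<inter> p -` U) = vol E m U"
proof -
  have count: "card (U \<inter> p ` e') = card ((V' \<inter> p -` U) \<inter> e')" if e': "e' \<in> E'" for e'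
  proof -
    obtain a b where ab: "e' = {a, b}" "a \<in> V'" "b \<in> V'" "p a \<noteq> p b"
      by (rule weak_cover_edge[OF cover_wgraph base_wgraph weak_cover e'])
    then have "a \<noteq> b" by auto
    then show ?thesis
      using ab card_Int_doubleton[of "p a" "p b" U] card_Int_doubleton[of a b "V' \<inter> p -` U"]
      by auto
  qed
  have "vol E m U = (\<Sum>e\<in>E. m e * card (U \<inter> e))"
    using finite_subset[OF assms finite_base_vertices] wgraph_finite_edges[OF base_wgraph]
    by (rule vol_eq_sum_edges)
  also have "\<dots> = (\<Sum>e'\<in>E'. m' e' * card (U \<inter> p ` e'))"
    using wgraph_finite_edges[OF cover_wgraph] weak_cover by (rule sum_edges_weak_cover)
  also have "\<dots> = (\<Sum>e'\<in>E'. m' e' * card ((V' \<inter> p -` U) \<inter> e'))"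
    using count by (intro sum.cong) auto
  also have "\<dots> = vol E' m' (V' \<inter> p -` U)"
    using finite_cover_vertices wgraph_finite_edges[OF cover_wgraph]
    by (intro vol_eq_sum_edges[symmetric]) auto
  finally show ?thesis ..
qed

lemma cut_preimage:
  assumes "U \<subseteq> V" "W \<subseteq> V"
  shows "cut E' m' (V' \<inter> p -` U) (V' \<inter> p -` W) = cut E m U W"
proof -
  let ?crossing = "\<lambda>U W e. card {(u, w) \<in> U \<times> W. {u, w} = e}"
  have count: "?crossing U W (p ` e') = ?crossing (V' \<inter> p -` U) (V' \<inter> p -` W) e'"
    if e': "e' \<in> E'" for e'
  proof -
    obtain a b where ab: "e' = {a, b}" "a \<in> V'" "b \<in> V'" "p a \<noteq> p b"
      by (rule weak_cover_edge[OF cover_wgraph base_wgraph weak_cover e'])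
    then have "a \<noteq> b" by auto
    then show ?thesis
      using ab card_pairs_doubleton[of "p a" "p b" U W]
        card_pairs_doubleton[of a b "V' \<inter> p -` U" "V' \<inter> p -` W"]
      by auto
  qed
  have "cut E m U W = (\<Sum>e\<in>E. m e * ?crossing U W e)"
    using finite_subset[OF assms(1) finite_base_vertices]
      finite_subset[OF assms(2) finite_base_vertices] wgraph_finite_edges[OF base_wgraph]
    by (rule cut_eq_sum_edges)
  also have "\<dots> = (\<Sum>e'\<in>E'. m' e' * ?crossing U W (p ` e'))"
    using wgraph_finite_edges[OF cover_wgraph] weak_cover by (rule sum_edges_weak_cover)
  also have "\<dots> = (\<Sum>e'\<in>E'. m' e' * ?crossing (V' \<inter> p -` U) (V' \<inter> p -` W) e')"
    using count by (intro sum.cong) auto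
  also have "\<dots> = cut E' m' (V' \<inter> p -` U) (V' \<inter> p -` W)"
    using finite_cover_vertices wgraph_finite_edges[OF cover_wgraph]
    by (intro cut_eq_sum_edges[symmetric]) auto
  finally show ?thesis ..
qed

lemma cheeger_ratio_preimage:
  assumes "U \<subseteq> V"
  shows "cheeger_ratio V' E' m' (V' \<inter> p -` U) = cheeger_ratio V E m U"
proof -
  have complement: "V' - (V' \<inter> p -` U) = V' \<inter> p -` (V - U)"
    and whole: "V' \<inter> p -` V = V'"
    using image_vertices by auto
  have "vol E' m' V' = vol E m V"
    using vol_preimage[of V] whole by simp
  then show ?thesis
    using assms unfolding cheeger_ratio_def complement
    by (simp add: vol_preimage cut_preimage)
qed

end

theorem proposition4p7:
  fixes V' :: "'a set" and E' :: "'a set set" and m' :: "'a set \<Rightarrow> real"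
    and V :: "'b set" and E :: "'b set set" and m :: "'b set \<Rightarrow> real"
    and p :: "'a \<Rightarrow> 'b"
  assumes "wgraph V' E' m'" and "wgraph V E m"
    and "2 \<le> card V"
    and "weak_cover V' E' m' V E m p"
  shows "cheeger V E m \<ge> cheeger V' E' m'"
proof -
  interpret weak_covering V' E' m' V E m p
    using assms(1,2,4) by unfold_locales
  obtain U where U: "U \<noteq> {}" "U \<subset> V" "cheeger V E m = cheeger_ratio V E m U"
    using cheeger_attained[OF finite_base_vertices assms(3)] .
  have "V' \<inter> p -` U \<noteq> {}" "V' \<inter> p -` U \<subset> V'"
    using U(1,2) image_vertices by auto
  then have "cheeger V' E' m' \<le> cheeger_ratio V' E' m' (V' \<inter> p -` U)"
    by (rule cheeger_le_ratio[OF finite_cover_vertices])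
  also have "\<dots> = cheeger V E m"
    using U(2,3) by (simp add: cheeger_ratio_preimage)
  finally show ?thesis .
qed

end
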